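(* Let $n\geq 1$. For a Tamari interval diagram $(u,v)$ of size $n$, let $\chi(u,v)$ be the binary relation $\lhd$ on the set $\{x_1,\dots,x_n\}$ consisting exactly of the pairs $x_{i+l}\lhd x_i$ for all $i\in[n]$ and $0\leq l\leq u_i$, and the pairs $x_{i-k}\lhd x_i$ for all $i\in[n]$ and $0\leq k\leq v_i$. Then $\chi(u,v)$ is an interval-poset of size $n$, and the map $\chi$ is a bijection from $\mathcal{TID}_n$ (the set of Tamari interval diagrams of size $n$) to $\mathcal{IP}_n$ (the set of interval-posets of size $n$).
   Context: $[n]=\{1,\dots,n\}$. A Tamari diagram of size $n$ is a word $u=u_1\cdots u_n$ of integers with $0\leq u_i\leq n-i$ for all $i\in[n]$ and $u_{i+j}\leq u_i-j$ for all $i\in[n]$ and $0\leq j\leq u_i$. A dual Tamari diagram of size $n$ is a word $v=v_1\cdots v_n$ of integers with $0\leq v_i\leq i-1$ for all $i\in[n]$ and $v_{i-j}\leq v_i-j$ for all $i\in[n]$ and $0\leq j\leq v_i$. A Tamari diagram $u$ and a dual Tamari diagram $v$ of the same size $n$ are compatible if for all $1\leq i<j\leq n$ with $j-i\leq u_i$ one has $v_j<j-i$; a compatible pair $(u,v)$ is a Tamari interval diagram of size $n$. An interval-poset of size $n$ is a partial order $\lhd$ on $\{x_1,\dots,x_n\}$ such that for all $i<k$: if $x_k\lhd x_i$ then $x_j\lhd x_i$ for all $i<j<k$, and if $x_i\lhd x_k$ then $x_j\lhd x_k$ for all $i<j<k$. *)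

theory Defs
  imports Main
begin

(* Words of size n are lists of length n; the i-th letter (1-based) is w ! (i-1). *)
definition letter :: "nat list \<Rightarrow> nat \<Rightarrow> nat" where
  "letter w i = w ! (i - 1)"

definition tamari_diagram :: "nat \<Rightarrow> nat list \<Rightarrow> bool" where
  "tamari_diagram n u \<longleftrightarrow> length u = n \<and>
     (\<forall>i\<in>{1..n}. letter u i \<le> n - i) \<and>
     (\<forall>i\<in>{1..n}. \<forall>j. j \<le> letter u i \<longrightarrow> letter u (i + j) \<le> letter u i - j)"

definition dual_tamari_diagram :: "nat \<Rightarrow> nat list \<Rightarrow> bool" where
  "dual_tamari_diagram n v \<longleftrightarrow> length v = n \<and>
     (\<forall>i\<in>{1..n}. letter v i \<le> i - 1) \<and>
     (\<forall>i\<in>{1..n}. \<forall>j. j \<le> letter v i \<longrightarrow> letter v (i - j) \<le> letter v i - j)"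

definition compatible :: "nat \<Rightarrow> nat list \<Rightarrow> nat list \<Rightarrow> bool" where
  "compatible n u v \<longleftrightarrow>
     (\<forall>i j. 1 \<le> i \<and> i < j \<and> j \<le> n \<and> j - i \<le> letter u i \<longrightarrow> letter v j < j - i)"

definition TID :: "nat \<Rightarrow> (nat list \<times> nat list) set" where
  "TID n = {(u, v). tamari_diagram n u \<and> dual_tamari_diagram n v \<and> compatible n u v}"

(* Relations on {x_1,...,x_n} are encoded as sets of index pairs:
   (a, b) \<in> R means x_a \<lhd> x_b. *)
definition interval_poset :: "nat \<Rightarrow> (nat \<times> nat) set \<Rightarrow> bool" where
  "interval_poset n R \<longleftrightarrow>
     R \<subseteq> {1..n} \<times> {1..n} \<and>
     (\<forall>x\<in>{1..n}. (x, x) \<in> R) \<and> antisym R \<and> trans R \<and>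
     (\<forall>i j k. 1 \<le> i \<and> i < j \<and> j < k \<and> k \<le> n \<longrightarrow>
        ((k, i) \<in> R \<longrightarrow> (j, i) \<in> R) \<and> ((i, k) \<in> R \<longrightarrow> (j, k) \<in> R))"

definition IP :: "nat \<Rightarrow> (nat \<times> nat) set set" where
  "IP n = {R. interval_poset n R}"

definition chi :: "nat \<Rightarrow> nat list \<times> nat list \<Rightarrow> (nat \<times> nat) set" where
  "chi n uv = (case uv of (u, v) \<Rightarrow>
     {(i + l, i) | i l. i \<in> {1..n} \<and> l \<le> letter u i} \<union>
     {(i - k, i) | i k. i \<in> {1..n} \<and> k \<le> letter v i})"

end

theory Submission
  imports Defs
begin

text \<open>By the interval condition, the elements \<open>x\<^sub>j \<lhd> x\<^sub>i\<close> of an interval-poset form a contiguous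
  block around \<open>i\<close>, so the poset is determined by how far this block reaches to the right and
  to the left of \<open>i\<close>; these two extents are the letters \<open>u\<^sub>i\<close> and \<open>v\<^sub>i\<close>. Under this
  correspondence transitivity is the closure condition of a (dual) Tamari diagram and
  antisymmetry is compatibility, so reading off the extents inverts \<open>chi\<close>.\<close>

lemma mem_iff_le_Max:
  fixes S :: "nat set"
  assumes "finite S" "S \<noteq> {}" "\<And>l k. l \<in> S \<Longrightarrow> k \<le> l \<Longrightarrow> k \<in> S"
  shows "l \<in> S \<longleftrightarrow> l \<le> Max S"
  using Max_ge[OF assms(1)] assms(3)[OF Max_in[OF assms(1,2)]] by blast

lemma Max_Collect_le_eq:
  assumes "\<And>l::nat. P l \<longleftrightarrow> l \<le> m"
  shows "Max {l. P l} = m"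
proof -
  have "{l. P l} = {..m}" using assms by auto
  then show ?thesis by (auto intro!: Max_eqI)
qed

lemma letter_map_upt:
  assumes "i \<in> {1..n}"
  shows "letter (map f [1..<Suc n]) i = f i"
proof -
  have "i - 1 < n" "[1..<Suc n] ! (i - 1) = i" using assms by (auto simp: nth_upt simp del: upt_Suc)
  then show ?thesis by (simp add: letter_def del: upt_Suc)
qed

lemma letter_eqI:
  assumes "length w = n" "length w' = n" "\<And>i. i \<in> {1..n} \<Longrightarrow> letter w i = letter w' i"
  shows "w = w'"
proof (rule nth_equalityI)
  fix k assume "k < length w"
  then show "w ! k = w' ! k" using assms(3)[of "Suc k"] assms(1) by (simp add: letter_def)
qed (use assms in simp)

lemma TID_D:
  assumes "(u, v) \<in> TID n"
  shows TID_length: "length u = n" "length v = n"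
    and TID_tamari_bound: "\<And>i. i \<in> {1..n} \<Longrightarrow> letter u i \<le> n - i"
    and TID_tamari_closed: "\<And>i j. i \<in> {1..n} \<Longrightarrow> j \<le> letter u i \<Longrightarrow> letter u (i + j) \<le> letter u i - j"
    and TID_dual_bound: "\<And>i. i \<in> {1..n} \<Longrightarrow> letter v i \<le> i - 1"
    and TID_dual_closed: "\<And>i j. i \<in> {1..n} \<Longrightarrow> j \<le> letter v i \<Longrightarrow> letter v (i - j) \<le> letter v i - j"
    and TID_compatible: "\<And>i j. 1 \<le> i \<Longrightarrow> i < j \<Longrightarrow> j \<le> n \<Longrightarrow> j - i \<le> letter u i \<Longrightarrow> letter v j < j - i"
  using assms unfolding TID_def tamari_diagram_def dual_tamari_diagram_def compatible_def
  by auto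

lemma mem_chi_iff:
  "(a, b) \<in> chi n (u, v) \<longleftrightarrow> b \<in> {1..n} \<and>
     (b \<le> a \<and> a - b \<le> letter u b \<or> a \<le> b \<and> b - a \<le> letter v b)"
proof
  assume "b \<in> {1..n} \<and> (b \<le> a \<and> a - b \<le> letter u b \<or> a \<le> b \<and> b - a \<le> letter v b)"
  then consider "b \<in> {1..n}" "a = b + (a - b)" "a - b \<le> letter u b"
    | "b \<in> {1..n}" "a = b - (b - a)" "b - a \<le> letter v b"
    by fastforce
  then show "(a, b) \<in> chi n (u, v)"
    by cases (unfold chi_def, blast+)
qed (auto simp: chi_def)

lemma chi_upper_iff:
  "i \<in> {1..n} \<Longrightarrow> (i + l, i) \<in> chi n (u, v) \<longleftrightarrow> l \<le> letter u i"
  by (auto simp: mem_chi_iff)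

lemma chi_lower_iff:
  "i \<in> {1..n} \<Longrightarrow> letter v i < i \<Longrightarrow> (i - k, i) \<in> chi n (u, v) \<longleftrightarrow> k \<le> letter v i"
  by (auto simp: mem_chi_iff)

lemma antisym_chi:
  assumes "(u, v) \<in> TID n"
  shows "antisym (chi n (u, v))"
proof (rule antisymI, rule ccontr)
  fix a b assume "(a, b) \<in> chi n (u, v)" "(b, a) \<in> chi n (u, v)" "a \<noteq> b"
  then obtain i j where "i < j" "(j, i) \<in> chi n (u, v)" "(i, j) \<in> chi n (u, v)"
    by (metis linorder_neqE_nat)
  then have "1 \<le> i" "j \<le> n" "j - i \<le> letter u i" "j - i \<le> letter v j"
    by (auto simp: mem_chi_iff)
  then show False using TID_compatible[OF assms] \<open>i < j\<close> by fastforce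
qed

lemma trans_chi:
  assumes T: "(u, v) \<in> TID n"
  shows "trans (chi n (u, v))"
proof (rule transI)
  fix a b c assume ab: "(a, b) \<in> chi n (u, v)" and bc: "(b, c) \<in> chi n (u, v)"
  have b: "b \<in> {1..n}" and c: "c \<in> {1..n}" using ab bc by (auto simp: mem_chi_iff)
  note compat = TID_compatible[OF T]
  have "c \<le> a \<and> a - c \<le> letter u c \<or> a \<le> c \<and> c - a \<le> letter v c"
  \<comment> \<open>In the two mixed cases compatibility makes the step in the direction of \<open>c\<close> dominate.\<close>
  proof (cases "b \<le> a"; cases "c \<le> b")
    assume "b \<le> a" "c \<le> b"
    then have "a - b \<le> letter u b" "b - c \<le> letter u c" using ab bc by (auto simp: mem_chi_iff)
    moreover from this(2) have "letter u b \<le> letter u c - (b - c)"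
      using TID_tamari_closed[OF T c] \<open>c \<le> b\<close> by fastforce
    ultimately show ?thesis using \<open>b \<le> a\<close> \<open>c \<le> b\<close> by linarith
  next
    assume "b \<le> a" "\<not> c \<le> b"
    then have "a - b \<le> letter u b" "c - b \<le> letter v c" using ab bc by (auto simp: mem_chi_iff)
    moreover have "\<not> c - b \<le> letter u b"
      using compat[of b c] b c \<open>\<not> c \<le> b\<close> \<open>c - b \<le> letter v c\<close> by auto
    ultimately show ?thesis using \<open>b \<le> a\<close> by linarith
  next
    assume "\<not> b \<le> a" "c \<le> b"
    then have "b - a \<le> letter v b" "b - c \<le> letter u c" using ab bc by (auto simp: mem_chi_iff)
    moreover have "c < b \<Longrightarrow> letter v b < b - c"
      using compat[of c b] b c \<open>b - c \<le> letter u c\<close> by auto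
    ultimately show ?thesis using \<open>\<not> b \<le> a\<close> \<open>c \<le> b\<close> by (cases "c < b") auto
  next
    assume "\<not> b \<le> a" "\<not> c \<le> b"
    then have "b - a \<le> letter v b" "c - b \<le> letter v c" using ab bc by (auto simp: mem_chi_iff)
    moreover from this(2) have "letter v b \<le> letter v c - (c - b)"
      using TID_dual_closed[OF T c] \<open>\<not> c \<le> b\<close> by fastforce
    ultimately show ?thesis using \<open>\<not> b \<le> a\<close> \<open>\<not> c \<le> b\<close> by linarith
  qed
  then show "(a, c) \<in> chi n (u, v)" using c by (simp add: mem_chi_iff)
qed

lemma interval_poset_chi:
  assumes T: "(u, v) \<in> TID n"
  shows "interval_poset n (chi n (u, v))"
proof -
  have "chi n (u, v) \<subseteq> {1..n} \<times> {1..n}"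
    using TID_tamari_bound[OF T] TID_dual_bound[OF T] by (fastforce simp: mem_chi_iff)
  then show ?thesis
    unfolding interval_poset_def using antisym_chi[OF T] trans_chi[OF T]
    by (auto simp: mem_chi_iff)
qed

definition upper_letter :: "(nat \<times> nat) set \<Rightarrow> nat \<Rightarrow> nat" where
  "upper_letter R i = Max {l. (i + l, i) \<in> R}"

definition lower_letter :: "(nat \<times> nat) set \<Rightarrow> nat \<Rightarrow> nat" where
  "lower_letter R i = Max {k. (i - k, i) \<in> R}"

definition diagram_of :: "nat \<Rightarrow> (nat \<times> nat) set \<Rightarrow> nat list \<times> nat list" where
  "diagram_of n R = (map (upper_letter R) [1..<Suc n], map (lower_letter R) [1..<Suc n])"

lemma diagram_ofD:
  assumes "diagram_of n R = (u, v)"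
  shows diagram_of_length: "length u = n" "length v = n"
    and letter_diagram_of_upper: "i \<in> {1..n} \<Longrightarrow> letter u i = upper_letter R i"
    and letter_diagram_of_lower: "i \<in> {1..n} \<Longrightarrow> letter v i = lower_letter R i"
proof -
  have uv: "u = map (upper_letter R) [1..<Suc n]" "v = map (lower_letter R) [1..<Suc n]"
    using assms by (simp_all add: diagram_of_def)
  then show "length u = n" "length v = n" by simp_all
  show "i \<in> {1..n} \<Longrightarrow> letter u i = upper_letter R i"
    "i \<in> {1..n} \<Longrightarrow> letter v i = lower_letter R i"
    unfolding uv by (simp_all only: letter_map_upt)
qed

lemma interval_posetD:
  assumes "interval_poset n R"
  shows interval_poset_subset: "R \<subseteq> {1..n} \<times> {1..n}"
    and interval_poset_refl: "x \<in> {1..n} \<Longrightarrow> (x, x) \<in> R"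
    and interval_poset_antisym: "antisym R"
    and interval_poset_trans: "trans R"
    and interval_poset_above: "1 \<le> i \<Longrightarrow> i < j \<Longrightarrow> j < k \<Longrightarrow> k \<le> n \<Longrightarrow> (k, i) \<in> R \<Longrightarrow> (j, i) \<in> R"
    and interval_poset_below: "1 \<le> i \<Longrightarrow> i < j \<Longrightarrow> j < k \<Longrightarrow> k \<le> n \<Longrightarrow> (i, k) \<in> R \<Longrightarrow> (j, k) \<in> R"
  using assms unfolding interval_poset_def by blast+

lemma interval_poset_upper_iff:
  assumes R: "interval_poset n R" and i: "i \<in> {1..n}"
  shows "(i + l, i) \<in> R \<longleftrightarrow> l \<le> upper_letter R i"
  unfolding upper_letter_def
proof (rule mem_iff_le_Max[where S = "{l. (i + l, i) \<in> R}", simplified])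
  have "{l. (i + l, i) \<in> R} \<subseteq> {..n}" using interval_poset_subset[OF R] by auto
  then show "finite {l. (i + l, i) \<in> R}" by (rule finite_subset) simp
  show "\<exists>l. (i + l, i) \<in> R" using interval_poset_refl[OF R i] by (intro exI[of _ 0]) simp
  fix l k assume l: "(i + l, i) \<in> R" and "k \<le> l"
  then consider "k = 0" | "k = l" | "i < i + k" "i + k < i + l" by linarith
  then show "(i + k, i) \<in> R"
  proof cases
    case 3
    moreover have "i + l \<le> n" using l interval_poset_subset[OF R] by auto
    ultimately show ?thesis using interval_poset_above[OF R _ _ _ _ l] i by simp
  qed (use l interval_poset_refl[OF R i] in simp_all)
qed

lemma interval_poset_lower_iff:
  assumes R: "interval_poset n R" and i: "i \<in> {1..n}"
  shows "(i - k, i) \<in> R \<longleftrightarrow> k \<le> lower_letter R i"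
  unfolding lower_letter_def
proof (rule mem_iff_le_Max[where S = "{k. (i - k, i) \<in> R}", simplified])
  have "{k. (i - k, i) \<in> R} \<subseteq> {..<i}"
  proof
    fix k assume "k \<in> {k. (i - k, i) \<in> R}"
    then have "1 \<le> i - k" using interval_poset_subset[OF R] by auto
    then show "k \<in> {..<i}" by simp
  qed
  then show "finite {k. (i - k, i) \<in> R}" by (rule finite_subset) simp
  show "\<exists>k. (i - k, i) \<in> R" using interval_poset_refl[OF R i] by (intro exI[of _ 0]) simp
  fix l k assume l: "(i - l, i) \<in> R" and "k \<le> l"
  moreover have "1 \<le> i - l" using l interval_poset_subset[OF R] by auto
  ultimately consider "k = 0" | "k = l" | "1 \<le> i - l" "i - l < i - k" "i - k < i" by linarith
  then show "(i - k, i) \<in> R"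
  proof cases
    case 3
    then show ?thesis using interval_poset_below[OF R _ _ _ _ l] i by simp
  qed (use l interval_poset_refl[OF R i] in simp_all)
qed

lemma lower_letter_less:
  assumes R: "interval_poset n R" and i: "i \<in> {1..n}"
  shows "lower_letter R i < i"
proof -
  have "(i - lower_letter R i, i) \<in> R" using interval_poset_lower_iff[OF R i] by simp
  then have "1 \<le> i - lower_letter R i" using interval_poset_subset[OF R] by auto
  then show ?thesis by linarith
qed

lemma diagram_of_chi:
  assumes T: "(u, v) \<in> TID n"
  shows "diagram_of n (chi n (u, v)) = (u, v)"
proof -
  obtain u' v' where uv': "diagram_of n (chi n (u, v)) = (u', v')" by force
  have "letter u' i = letter u i" if "i \<in> {1..n}" for i
    unfolding letter_diagram_of_upper[OF uv' that] upper_letter_def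
    using chi_upper_iff[OF that] by (rule Max_Collect_le_eq)
  moreover have "letter v' i = letter v i" if "i \<in> {1..n}" for i
    unfolding letter_diagram_of_lower[OF uv' that] lower_letter_def
    using chi_lower_iff[OF that] TID_dual_bound[OF T that] that by (intro Max_Collect_le_eq) auto
  ultimately show ?thesis
    using uv' diagram_of_length[OF uv'] TID_length[OF T] by (auto intro!: letter_eqI)
qed

lemma diagram_of_TID:
  assumes R: "interval_poset n R"
  shows "diagram_of n R \<in> TID n"
proof -
  obtain u v where uv: "diagram_of n R = (u, v)" by force
  note lu = letter_diagram_of_upper[OF uv] and lv = letter_diagram_of_lower[OF uv]
  note sub = interval_poset_subset[OF R]
  have up: "(i + l, i) \<in> R \<longleftrightarrow> l \<le> letter u i" and down: "(i - k, i) \<in> R \<longleftrightarrow> k \<le> letter v i"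
    if "i \<in> {1..n}" for i l k
    using interval_poset_upper_iff[OF R that] interval_poset_lower_iff[OF R that] lu lv that
    by simp_all
  have "tamari_diagram n u"
    unfolding tamari_diagram_def
  proof (intro conjI ballI allI impI)
    show "length u = n" using diagram_of_length(1)[OF uv] .
  next
    fix i assume i: "i \<in> {1..n}"
    show "letter u i \<le> n - i" using up[OF i, of "letter u i"] sub by auto
    fix j assume j: "j \<le> letter u i"
    then have ij: "(i + j, i) \<in> R" using up[OF i] by simp
    then have "i + j \<in> {1..n}" using sub by auto
    then have "(i + j + letter u (i + j), i + j) \<in> R" using up by simp
    then have "(i + (j + letter u (i + j)), i) \<in> R"
      using transD[OF interval_poset_trans[OF R] _ ij] by (simp add: add.assoc)
    then show "letter u (i + j) \<le> letter u i - j" using up[OF i] by simp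
  qed
  moreover have "dual_tamari_diagram n v"
    unfolding dual_tamari_diagram_def
  proof (intro conjI ballI allI impI)
    show "length v = n" using diagram_of_length(2)[OF uv] .
  next
    fix i assume i: "i \<in> {1..n}"
    show "letter v i \<le> i - 1" using lower_letter_less[OF R i] lv[OF i] by simp
    fix j assume j: "j \<le> letter v i"
    then have ij: "(i - j, i) \<in> R" using down[OF i] by simp
    then have "i - j \<in> {1..n}" using sub by auto
    then have "(i - j - letter v (i - j), i - j) \<in> R"
      using down[of "i - j" "letter v (i - j)"] by blast
    then have "(i - (j + letter v (i - j)), i) \<in> R"
      using transD[OF interval_poset_trans[OF R] _ ij] by (simp add: diff_diff_add)
    then show "letter v (i - j) \<le> letter v i - j" using down[OF i] by simp
  qed
  moreover have "compatible n u v"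
    unfolding compatible_def
  proof (intro allI impI)
    fix i j assume h: "1 \<le> i \<and> i < j \<and> j \<le> n \<and> j - i \<le> letter u i"
    then have "(j, i) \<in> R" using up[of i "j - i"] by simp
    moreover have "\<not> letter v j < j - i \<Longrightarrow> (i, j) \<in> R" using down[of j "j - i"] h by simp
    ultimately show "letter v j < j - i" using antisymD[OF interval_poset_antisym[OF R]] h by fastforce
  qed
  ultimately show ?thesis using uv by (simp add: TID_def)
qed

lemma chi_diagram_of:
  assumes R: "interval_poset n R"
  shows "chi n (diagram_of n R) = R"
proof -
  obtain u v where uv: "diagram_of n R = (u, v)" by force
  have "(a, b) \<in> chi n (u, v) \<longleftrightarrow> (a, b) \<in> R" for a b
  proof (cases "b \<in> {1..n}")
    case True
    have "(b + (a - b), b) \<in> R \<longleftrightarrow> a - b \<le> letter u b"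
      "(b - (b - a), b) \<in> R \<longleftrightarrow> b - a \<le> letter v b"
      using interval_poset_upper_iff[OF R True] interval_poset_lower_iff[OF R True]
        letter_diagram_of_upper[OF uv True] letter_diagram_of_lower[OF uv True] by simp_all
    then show ?thesis using True by (cases "b \<le> a") (auto simp: mem_chi_iff)
  next
    case False
    then show ?thesis using interval_poset_subset[OF R] by (auto simp: mem_chi_iff)
  qed
  then show ?thesis using uv by auto
qed

theorem theorem1p4:
  fixes n :: nat
  assumes "n \<ge> 1"
  shows "(\<forall>uv \<in> TID n. interval_poset n (chi n uv)) \<and> bij_betw (chi n) (TID n) (IP n)"
proof
  show chi_IP: "\<forall>uv \<in> TID n. interval_poset n (chi n uv)"
    using interval_poset_chi by auto
  show "bij_betw (chi n) (TID n) (IP n)"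
  proof (rule bij_betw_byWitness[where f' = "diagram_of n"])
    show "\<forall>uv \<in> TID n. diagram_of n (chi n uv) = uv" using diagram_of_chi by auto
    show "\<forall>R \<in> IP n. chi n (diagram_of n R) = R" using chi_diagram_of by (auto simp: IP_def)
    show "chi n ` TID n \<subseteq> IP n" using chi_IP by (auto simp: IP_def)
    show "diagram_of n ` IP n \<subseteq> TID n" using diagram_of_TID by (auto simp: IP_def)
  qed
qed

end
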